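(* Let $M$ be a large positive parameter and let $\mathcal{X}$ be any subset of $\{1,2,\ldots,10^M\}$. For a large positive parameter $N$, let $\mathcal{J}(N)$ denote the number of solutions $(x,y,p)$ of $$x\equiv y \pmod p;\qquad x,y\in\mathcal{X},\quad p\le N,\ p \text{ prime}.$$ Then $$\mathcal{J}(N)=\pi(N)\,|\mathcal{X}|+O\!\left(\frac{|\mathcal{X}|^2 M}{\log M}\right),$$ where the implied constant is absolute.
   Context: $\pi(N)$ denotes the number of primes $p\le N$. *)

theory Defs
  imports "HOL-Number_Theory.Number_Theory"
begin

definition primepi :: "real \<Rightarrow> nat" where
  "primepi N = card {p::nat. prime p \<and> real p \<le> N}"

definition Jcount :: "nat set \<Rightarrow> real \<Rightarrow> nat" where
  "Jcount X N = card {(x, y, p). x \<in> X \<and> y \<in> X \<and> prime p \<and> real p \<le> N \<and> [x = y] (mod p)}"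

end

theory Submission
  imports Defs
begin

text \<open>The diagonal solutions \<open>x = y\<close> contribute exactly \<open>\<pi>(N) |X|\<close>. An off-diagonal pair
  \<open>x \<noteq> y\<close> contributes only primes dividing \<open>0 < |x - y| \<le> 10\<^sup>M\<close>, and a positive integer
  \<open>d\<close> has at most \<open>s + log d / log s\<close> prime factors for any \<open>s > 1\<close> (those above \<open>s\<close>
  multiply to at most \<open>d\<close>); the choice \<open>s = \<surd>M\<close> gives \<open>O(M / log M)\<close> per pair.\<close>

definition off_diagonal_solutions :: "nat set \<Rightarrow> real \<Rightarrow> (nat \<times> nat \<times> nat) set" where
  "off_diagonal_solutions X N =
     {(x, y, p). x \<in> X \<and> y \<in> X \<and> x \<noteq> y \<and> prime p \<and> real p \<le> N \<and> [x = y] (mod p)}"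

lemma prod_prime_factors_dvd:
  fixes d :: nat
  shows "\<Prod>(prime_factors d) dvd d"
proof (cases "d = 0")
  case False
  have "\<Prod>(prime_factors d) dvd (\<Prod>p\<in>prime_factors d. p ^ multiplicity p d)"
    by (intro prod_dvd_prod dvd_power) (auto simp: prime_factors_multiplicity)
  also have "\<dots> = d"
    using False by (simp add: prod_prime_factors)
  finally show ?thesis .
qed simp

lemma card_prime_factors_le:
  fixes d :: nat and s :: real
  assumes "d > 0" "s > 1"
  shows "real (card (prime_factors d)) \<le> s + ln d / ln s"
proof -
  define small where "small = {p \<in> prime_factors d. real p \<le> s}"
  define large where "large = {p \<in> prime_factors d. real p > s}"
  have "small \<subseteq> {1..nat \<lfloor>s\<rfloor>}"
  proof
    fix p assume "p \<in> small"
    then have "prime p" "real p \<le> s"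
      by (auto simp: small_def intro: in_prime_factors_imp_prime)
    then show "p \<in> {1..nat \<lfloor>s\<rfloor>}"
      using prime_ge_1_nat[of p] by (simp add: le_nat_floor)
  qed
  then have "card small \<le> nat \<lfloor>s\<rfloor>"
    using card_mono[of "{1..nat \<lfloor>s\<rfloor>}" small] by simp
  then have card_small: "real (card small) \<le> s"
    using assms(2) by linarith
  have "\<Prod>large dvd \<Prod>(prime_factors d)"
    by (rule prod_dvd_prod_subset) (auto simp: large_def)
  then have "\<Prod>large dvd d"
    using prod_prime_factors_dvd dvd_trans by blast
  then have "\<Prod>large \<le> d"
    using assms(1) by (simp add: dvd_imp_le)
  have "s ^ card large = (\<Prod>p\<in>large. s)"
    by simp
  also have "\<dots> \<le> (\<Prod>p\<in>large. real p)"
    using assms(2) by (intro prod_mono) (auto simp: large_def)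
  also have "\<dots> \<le> real d"
    using \<open>\<Prod>large \<le> d\<close> unfolding of_nat_prod[symmetric] of_nat_le_iff .
  finally have "ln (s ^ card large) \<le> ln d"
    using assms by (subst ln_le_cancel_iff) auto
  then have "real (card large) * ln s \<le> ln d"
    using assms(2) by (simp add: ln_realpow)
  then have card_large: "real (card large) \<le> ln d / ln s"
    using assms(2) by (simp add: field_simps)
  have "prime_factors d = small \<union> large" "small \<inter> large = {}"
    by (auto simp: small_def large_def)
  then have "card (prime_factors d) = card small + card large"
    by (metis card_Un_disjoint finite_Un finite_set_mset)
  then show ?thesis
    using card_small card_large by simp
qed

lemma card_prime_factors_le_powr_10:
  fixes d :: nat and M :: real
  assumes "d > 0" "real d \<le> 10 powr M" "M > 1"
  shows "real (card (prime_factors d)) \<le> 20 * M / ln M"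
proof -
  have ln_M: "ln M > 0"
    using assms(3) by simp
  have "sqrt M \<le> 2 * M / ln M"
  proof -
    have "ln M = 2 * ln (sqrt M)"
      using assms(3) by (simp add: ln_sqrt)
    also have "\<dots> \<le> 2 * sqrt M"
      using assms(3) ln_le_minus_one[of "sqrt M"] by simp
    finally have "sqrt M * ln M \<le> sqrt M * (2 * sqrt M)"
      using assms(3) by (intro mult_left_mono) auto
    also have "\<dots> = 2 * (sqrt M)\<^sup>2"
      by (simp add: power2_eq_square)
    also have "\<dots> = 2 * M"
      using assms(3) by simp
    finally show ?thesis
      using ln_M by (simp add: pos_le_divide_eq)
  qed
  moreover have "ln d / ln (sqrt M) \<le> 18 * M / ln M"
  proof -
    have "ln d \<le> ln (10 powr M)"
      using assms(1,2) by (subst ln_le_cancel_iff) auto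
    also have "\<dots> = M * ln 10"
      by (simp add: ln_powr)
    also have "\<dots> \<le> M * 9"
      using assms(3) ln_le_minus_one[of 10] by (intro mult_left_mono) auto
    finally have "2 * ln d \<le> 18 * M"
      by simp
    then have "2 * ln d / ln M \<le> 18 * M / ln M"
      using ln_M by (intro divide_right_mono) auto
    moreover have "ln d / ln (sqrt M) = 2 * ln d / ln M"
      using assms(3) by (simp add: ln_sqrt)
    ultimately show ?thesis
      by simp
  qed
  ultimately show ?thesis
    using card_prime_factors_le[OF assms(1), of "sqrt M"] assms(3) by simp
qed

lemma finite_nat_le_real: "finite {n::nat. real n \<le> K}"
  by (rule finite_subset[of _ "{..nat \<lfloor>K\<rfloor>}"]) (auto simp: le_nat_floor)

lemma finite_primes_le: "finite {p::nat. prime p \<and> real p \<le> N}"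
  by (rule finite_subset[OF _ finite_nat_le_real]) auto

lemma Jcount_eq_diagonal_plus_off_diagonal:
  assumes "finite X"
  shows "Jcount X N = primepi N * card X + card (off_diagonal_solutions X N)"
proof -
  define primes where "primes = {p::nat. prime p \<and> real p \<le> N}"
  define diag where "diag = (\<lambda>(x, p). (x, x, p)) ` (X \<times> primes)"
  have "{(x, y, p). x \<in> X \<and> y \<in> X \<and> prime p \<and> real p \<le> N \<and> [x = y] (mod p)} =
      diag \<union> off_diagonal_solutions X N"
    by (auto simp: diag_def primes_def off_diagonal_solutions_def)
  moreover have "finite (off_diagonal_solutions X N)"
    by (rule finite_subset[of _ "X \<times> X \<times> primes"])
       (use assms finite_primes_le in \<open>auto simp: primes_def off_diagonal_solutions_def\<close>)
  moreover have "finite diag" "diag \<inter> off_diagonal_solutions X N = {}"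
    using assms finite_primes_le by (auto simp: diag_def primes_def off_diagonal_solutions_def)
  moreover have "card diag = card X * primepi N"
    unfolding diag_def primepi_def primes_def
    by (subst card_image) (auto simp: inj_on_def card_cartesian_product)
  ultimately show ?thesis
    unfolding Jcount_def by (simp add: card_Un_disjoint)
qed

lemma card_off_diagonal_le:
  fixes B :: real
  assumes "finite X" "B \<ge> 0"
    and "\<And>x y. x \<in> X \<Longrightarrow> y \<in> X \<Longrightarrow> x \<noteq> y \<Longrightarrow>
           real (card (prime_factors (nat \<bar>int x - int y\<bar>))) \<le> B"
  shows "real (card (off_diagonal_solutions X N)) \<le> real (card X) ^ 2 * B"
proof -
  define pairs where "pairs = {(x, y). x \<in> X \<and> y \<in> X \<and> x \<noteq> y}"
  define divs where "divs = (\<lambda>(x, y). prime_factors (nat \<bar>int x - int y\<bar>))"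
  have finite_pairs: "finite pairs"
    by (rule finite_subset[of _ "X \<times> X"]) (auto simp: pairs_def assms(1))
  have "off_diagonal_solutions X N \<subseteq> (\<lambda>((x, y), p). (x, y, p)) ` Sigma pairs divs"
  proof
    fix t assume "t \<in> off_diagonal_solutions X N"
    then obtain x y p where t: "t = (x, y, p)" "x \<in> X" "y \<in> X" "x \<noteq> y" "prime p"
        "p dvd nat \<bar>int x - int y\<bar>"
      by (auto simp: off_diagonal_solutions_def cong_altdef_nat')
    then have "((x, y), p) \<in> Sigma pairs divs"
      by (auto simp: pairs_def divs_def intro: prime_factorsI)
    then show "t \<in> (\<lambda>((x, y), p). (x, y, p)) ` Sigma pairs divs"
      using t(1) by force
  qed
  moreover have "finite (Sigma pairs divs)"
    using finite_pairs by (auto simp: divs_def)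
  ultimately have "card (off_diagonal_solutions X N) \<le> card (Sigma pairs divs)"
    by (meson card_image_le card_mono finite_imageI le_trans)
  also have "\<dots> = (\<Sum>i\<in>pairs. card (divs i))"
    using finite_pairs by (intro card_SigmaI) (auto simp: divs_def)
  finally have "real (card (off_diagonal_solutions X N)) \<le> (\<Sum>i\<in>pairs. real (card (divs i)))"
    unfolding of_nat_sum[symmetric] of_nat_le_iff .
  also have "\<dots> \<le> (\<Sum>i\<in>pairs. B)"
    using assms(3) by (intro sum_mono) (auto simp: pairs_def divs_def)
  also have "\<dots> = real (card pairs) * B"
    by simp
  also have "\<dots> \<le> real (card X) ^ 2 * B"
  proof -
    have "card pairs \<le> card (X \<times> X)"
      using assms(1) by (intro card_mono) (auto simp: pairs_def)
    then have "real (card pairs) \<le> real (card X) ^ 2"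
      by (simp add: card_cartesian_product power2_eq_square flip: of_nat_mult)
    then show ?thesis
      using assms(2) by (rule mult_right_mono)
  qed
  finally show ?thesis .
qed

theorem theorem1:
  shows "\<exists>C::real. \<exists>M0::real. \<exists>N0::real. \<forall>M N. \<forall>X::nat set.
           M \<ge> M0 \<longrightarrow> N \<ge> N0 \<longrightarrow> X \<subseteq> {x. 1 \<le> x \<and> real x \<le> 10 powr M} \<longrightarrow>
           \<bar>real (Jcount X N) - real (primepi N) * real (card X)\<bar>
             \<le> C * real (card X) ^ 2 * M / ln M"
proof (rule exI[where x = 20], rule exI[where x = 2], rule exI[where x = 0], intro allI impI)
  fix M N :: real and X :: "nat set"
  assume M: "2 \<le> M" and "0 \<le> N" and X: "X \<subseteq> {x. 1 \<le> x \<and> real x \<le> 10 powr M}"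
  have "finite X"
    using X by (intro finite_subset[OF _ finite_nat_le_real[of "10 powr M"]]) auto
  have "real (card (prime_factors (nat \<bar>int x - int y\<bar>))) \<le> 20 * M / ln M"
    if "x \<in> X" "y \<in> X" "x \<noteq> y" for x y
  proof (rule card_prime_factors_le_powr_10)
    have "real x \<le> 10 powr M" "real y \<le> 10 powr M"
      using that X by auto
    moreover have "nat \<bar>int x - int y\<bar> \<le> max x y"
      by simp
    ultimately show "real (nat \<bar>int x - int y\<bar>) \<le> 10 powr M"
      by (metis max_def of_nat_le_iff order_trans)
  qed (use that M in auto)
  then have "real (card (off_diagonal_solutions X N)) \<le> real (card X) ^ 2 * (20 * M / ln M)"
    using \<open>finite X\<close> M by (intro card_off_diagonal_le) auto
  then show "\<bar>real (Jcount X N) - real (primepi N) * real (card X)\<bar>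
      \<le> 20 * real (card X) ^ 2 * M / ln M"
    by (simp add: Jcount_eq_diagonal_plus_off_diagonal[OF \<open>finite X\<close>] ac_simps)
qed

end
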